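(* Let $n\in\mathbb{R}_+^I$. Consider the problem: minimize $\beta(m)$ subject to $\sum_{j\in i}m_{ji}=n_i$ for $i\in\mathcal{I}$, over $m_{ji}\ge0$ ($i\in\mathcal{I}$, $j\in i$). Its Lagrange dual (with multipliers $\lambda\in\mathbb{R}^I$ for the equality constraints, after substituting $\Lambda_i=e^{\lambda_i}$) is the problem $$\text{maximize}\ \sum_{i\in\mathcal{I}}n_i\log\Lambda_i\quad\text{subject to}\quad\sum_{i: j\in i}\frac{\Lambda_i}{\mu_{ji}}\le1\ \ (j\in\mathcal{J})\quad\text{over}\ \Lambda_i\ge0,\ i\in\mathcal{I}.$$
   Context: Finite set of queues $\mathcal{J}$, finite set of routes $\mathcal{I}$ ($I=|\mathcal{I}|$), each route a subset of $\mathcal{J}$, rates $\mu_{ji}>0$ for $j\in i$. For $m=(m_{ji}: j\in i)\ge0$ with $m_j=\sum_{i: j\in i}m_{ji}$, $\beta(m)=\sum_{j\in\mathcal{J}}\sum_{i: j\in i,\,m_{ji}>0}m_{ji}\log\frac{m_{ji}\mu_{ji}}{m_j}$. *)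

theory Defs
  imports "HOL-Analysis.Analysis"
begin

text \<open>Queues have type 'j; a route is a set of queues; Rt is the finite set of routes.
  Quantities indexed by pairs (j,i) with j in i are functions of type 'j => 'j set => real.\<close>

definition load :: "'j set set \<Rightarrow> ('j \<Rightarrow> 'j set \<Rightarrow> real) \<Rightarrow> 'j \<Rightarrow> real" where
  "load Rt m j = (\<Sum>i\<in>{i\<in>Rt. j \<in> i}. m j i)"

definition beta :: "'j set \<Rightarrow> 'j set set \<Rightarrow> ('j \<Rightarrow> 'j set \<Rightarrow> real)
    \<Rightarrow> ('j \<Rightarrow> 'j set \<Rightarrow> real) \<Rightarrow> real" where
  "beta J Rt mu m = (\<Sum>j\<in>J. \<Sum>i\<in>{i\<in>Rt. j \<in> i \<and> m j i > 0}.
      m j i * ln (m j i * mu j i / load Rt m j))"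

definition lagrangian :: "'j set \<Rightarrow> 'j set set \<Rightarrow> ('j \<Rightarrow> 'j set \<Rightarrow> real) \<Rightarrow> ('j set \<Rightarrow> real)
    \<Rightarrow> ('j \<Rightarrow> 'j set \<Rightarrow> real) \<Rightarrow> ('j set \<Rightarrow> real) \<Rightarrow> real" where
  "lagrangian J Rt mu n m lam =
     beta J Rt mu m + (\<Sum>i\<in>Rt. lam i * (n i - (\<Sum>j\<in>i. m j i)))"

definition dual_fun :: "'j set \<Rightarrow> 'j set set \<Rightarrow> ('j \<Rightarrow> 'j set \<Rightarrow> real) \<Rightarrow> ('j set \<Rightarrow> real)
    \<Rightarrow> ('j set \<Rightarrow> real) \<Rightarrow> ereal" where
  "dual_fun J Rt mu n lam =
     (INF m\<in>{m. \<forall>i\<in>Rt. \<forall>j\<in>i. m j i \<ge> 0}. ereal (lagrangian J Rt mu n m lam))"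

definition elog :: "real \<Rightarrow> ereal" where
  "elog x = (if x > 0 then ereal (ln x) else -\<infinity>)"

end

theory Submission
  imports Defs
begin

text \<open>
  For fixed multipliers \<lambda> the Lagrangian is \<Sum>_i n_i \<lambda>_i plus one term per queue j
  (\<open>queue_excess\<close>). If \<Sum>_{i \<ni> j} e^\<lambda>_i / \<mu>_ji \<le> 1, Gibbs' inequality (from ln x \<ge> 1 - 1/x)
  makes this term nonnegative, and it vanishes at m = 0, so the dual function is \<Sum>_i n_i \<lambda>_i.
  If the inequality fails at some queue, the term is linear and negative along the ray
  m_ji \<propto> e^\<lambda>_i / \<mu>_ji, so the dual function is -\<infinity>. Under \<Lambda> = e^\<lambda> the two suprema then
  agree, since a feasible \<Lambda> with some \<Lambda>_i = 0 is approached by the strictly feasible points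
  t\<Lambda> + s (t < 1 close to 1, s > 0 small).
\<close>

lemma entropy_term_ge:
  fixes m M mu l :: real
  assumes "m > 0" "M > 0" "mu > 0"
  shows "m * ln (m * mu / M) \<ge> l * m + m - M * (exp l / mu)"
proof -
  define x where "x = m * mu / (M * exp l)"
  have x: "x > 0" using assms by (simp add: x_def)
  have "ln (1/x) \<le> 1/x - 1" using x by (intro ln_le_minus_one) simp
  hence ln_x: "ln x \<ge> 1 - 1/x" using x by (simp add: ln_div)
  have "ln (m * mu / M) = ln x + l" unfolding x_def using assms by (simp add: ln_div ln_mult)
  hence "m * ln (m * mu / M) = m * ln x + l * m" by (simp add: algebra_simps)
  also have "\<dots> \<ge> m * (1 - 1/x) + l * m" using ln_x assms by simp
  also have "m * (1 - 1/x) = m - M * (exp l / mu)" unfolding x_def using assms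
    by (simp add: field_simps)
  finally show ?thesis by simp
qed

lemma gibbs_sum_le:
  fixes m mu l :: "'a \<Rightarrow> real"
  assumes "finite S" "\<forall>i\<in>S. m i \<ge> 0" "\<forall>i\<in>S. mu i > 0" "(\<Sum>i\<in>S. exp (l i) / mu i) \<le> 1"
  shows "(\<Sum>i\<in>S. l i * m i) \<le> (\<Sum>i\<in>{i\<in>S. m i > 0}. m i * ln (m i * mu i / (\<Sum>i\<in>S. m i)))"
proof -
  define M where "M = (\<Sum>i\<in>S. m i)"
  define P where "P = {i\<in>S. m i > 0}"
  have PS: "P \<subseteq> S" by (auto simp: P_def)
  have on_P: "(\<Sum>i\<in>S. l i * m i) = (\<Sum>i\<in>P. l i * m i)" "M = (\<Sum>i\<in>P. m i)"
    unfolding M_def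
    by (rule sum.mono_neutral_right[OF assms(1) PS]; use assms(2) in \<open>auto simp: P_def\<close>)+
  show ?thesis
  proof (cases "P = {}")
    case True
    then show ?thesis unfolding P_def[symmetric] using on_P(1) by simp
  next
    case False
    have M: "M > 0" unfolding on_P(2) using False assms(1) by (intro sum_pos) (auto simp: P_def)
    have "(\<Sum>i\<in>P. exp (l i) / mu i) \<le> (\<Sum>i\<in>S. exp (l i) / mu i)"
      by (rule sum_mono2[OF assms(1) PS]) (use assms(3) in \<open>auto intro: less_imp_le\<close>)
    hence "M * (\<Sum>i\<in>P. exp (l i) / mu i) \<le> M" using assms(4) M by (intro mult_left_le) auto
    hence "(\<Sum>i\<in>P. l i * m i) \<le> (\<Sum>i\<in>P. l i * m i) + M - M * (\<Sum>i\<in>P. exp (l i) / mu i)"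
      by simp
    also have "\<dots> = (\<Sum>i\<in>P. l i * m i + m i - M * (exp (l i) / mu i))"
      by (simp add: sum.distrib sum_subtractf sum_distrib_left on_P(2))
    also have "\<dots> \<le> (\<Sum>i\<in>P. m i * ln (m i * mu i / M))"
      by (intro sum_mono entropy_term_ge) (use M assms PS in \<open>auto simp: P_def\<close>)
    finally show ?thesis using on_P(1) by (simp add: M_def P_def)
  qed
qed

definition queue_excess :: "'j set set \<Rightarrow> ('j \<Rightarrow> 'j set \<Rightarrow> real) \<Rightarrow> ('j \<Rightarrow> 'j set \<Rightarrow> real)
    \<Rightarrow> ('j set \<Rightarrow> real) \<Rightarrow> 'j \<Rightarrow> real" where
  "queue_excess Rt mu m lam j =
     (\<Sum>i\<in>{i\<in>Rt. j \<in> i \<and> m j i > 0}. m j i * ln (m j i * mu j i / load Rt m j))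
     - (\<Sum>i\<in>{i\<in>Rt. j \<in> i}. lam i * m j i)"

lemma lagrangian_eq_sum_queue_excess:
  assumes "finite J" "finite Rt" "\<forall>i\<in>Rt. i \<subseteq> J"
  shows "lagrangian J Rt mu n m lam =
           (\<Sum>i\<in>Rt. n i * lam i) + (\<Sum>j\<in>J. queue_excess Rt mu m lam j)"
proof -
  have "(\<Sum>i\<in>Rt. \<Sum>j\<in>i. lam i * m j i) = (\<Sum>i\<in>Rt. \<Sum>j\<in>{j\<in>J. j \<in> i}. lam i * m j i)"
    using assms(3) by (intro sum.cong refl) (auto intro: arg_cong[where f = "\<lambda>A. sum _ A"])
  also have "\<dots> = (\<Sum>j\<in>J. \<Sum>i\<in>{i\<in>Rt. j \<in> i}. lam i * m j i)"
    by (rule sum.swap_restrict[OF assms(2,1)])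
  finally have "(\<Sum>i\<in>Rt. lam i * (n i - (\<Sum>j\<in>i. m j i)))
      = (\<Sum>i\<in>Rt. n i * lam i) - (\<Sum>j\<in>J. \<Sum>i\<in>{i\<in>Rt. j \<in> i}. lam i * m j i)"
    by (simp add: algebra_simps sum_subtractf sum_distrib_left)
  then show ?thesis
    unfolding lagrangian_def beta_def queue_excess_def by (simp add: sum_subtractf)
qed

lemma queue_excess_nonneg:
  assumes "finite Rt" "\<forall>i\<in>Rt. j \<in> i \<longrightarrow> mu j i > 0 \<and> m j i \<ge> 0"
    and "(\<Sum>i\<in>{i\<in>Rt. j \<in> i}. exp (lam i) / mu j i) \<le> 1"
  shows "queue_excess Rt mu m lam j \<ge> 0"
proof -
  have "{i\<in>{i\<in>Rt. j \<in> i}. m j i > 0} = {i\<in>Rt. j \<in> i \<and> m j i > 0}" by auto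
  moreover have "(\<Sum>i\<in>{i\<in>Rt. j \<in> i}. lam i * m j i)
      \<le> (\<Sum>i\<in>{i\<in>{i\<in>Rt. j \<in> i}. m j i > 0}. m j i * ln (m j i * mu j i / load Rt m j))"
    unfolding load_def by (rule gibbs_sum_le) (use assms in auto)
  ultimately show ?thesis unfolding queue_excess_def by simp
qed

lemma dual_fun_feasible:
  assumes "finite J" "finite Rt" "\<forall>i\<in>Rt. i \<subseteq> J" "\<forall>i\<in>Rt. \<forall>j\<in>i. mu j i > 0"
    and "\<forall>j\<in>J. (\<Sum>i\<in>{i\<in>Rt. j \<in> i}. exp (lam i) / mu j i) \<le> 1"
  shows "dual_fun J Rt mu n lam = ereal (\<Sum>i\<in>Rt. n i * lam i)"
  unfolding dual_fun_def
proof (rule antisym)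
  have "lagrangian J Rt mu n (\<lambda>j i. 0) lam = (\<Sum>i\<in>Rt. n i * lam i)"
    unfolding lagrangian_def beta_def by (simp add: mult.commute)
  then show "(INF m\<in>{m. \<forall>i\<in>Rt. \<forall>j\<in>i. m j i \<ge> 0}. ereal (lagrangian J Rt mu n m lam))
      \<le> ereal (\<Sum>i\<in>Rt. n i * lam i)"
    using INF_lower[of "\<lambda>j i. 0" _ "\<lambda>m. ereal (lagrangian J Rt mu n m lam)"] by simp
next
  have "(\<Sum>i\<in>Rt. n i * lam i) \<le> lagrangian J Rt mu n m lam"
    if "\<forall>i\<in>Rt. \<forall>j\<in>i. m j i \<ge> 0" for m
    unfolding lagrangian_eq_sum_queue_excess[OF assms(1-3)]
    using assms(2,4,5) that by (simp add: sum_nonneg queue_excess_nonneg)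
  then show "ereal (\<Sum>i\<in>Rt. n i * lam i)
      \<le> (INF m\<in>{m. \<forall>i\<in>Rt. \<forall>j\<in>i. m j i \<ge> 0}. ereal (lagrangian J Rt mu n m lam))"
    by (auto intro!: INF_greatest)
qed

text \<open>On this ray the load of queue j0 splits over its routes in proportion to e^\<lambda>_i / \<mu>_j0i,
  so every logarithm in its term equals \<lambda>_i - ln c.\<close>

definition overload_ray :: "('j \<Rightarrow> 'j set \<Rightarrow> real) \<Rightarrow> ('j set \<Rightarrow> real) \<Rightarrow> 'j \<Rightarrow> real
    \<Rightarrow> 'j \<Rightarrow> 'j set \<Rightarrow> real" where
  "overload_ray mu lam j0 s j i = (if j = j0 \<and> j0 \<in> i then s * (exp (lam i) / mu j0 i) else 0)"

lemma queue_excess_overload_ray: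
  assumes "finite Rt" "\<forall>i\<in>Rt. \<forall>j\<in>i. mu j i > 0" "s > 0"
    and c: "c = (\<Sum>i\<in>{i\<in>Rt. j0 \<in> i}. exp (lam i) / mu j0 i)" "c > 0"
  shows "queue_excess Rt mu (overload_ray mu lam j0 s) lam j =
           (if j = j0 then - s * c * ln c else 0)"
proof (cases "j = j0")
  case True
  let ?S = "{i\<in>Rt. j0 \<in> i}"
  let ?m = "overload_ray mu lam j0 s"
  have pos: "{i\<in>Rt. j0 \<in> i \<and> ?m j0 i > 0} = ?S"
    using assms(2,3) by (auto simp: overload_ray_def)
  have load: "load Rt ?m j0 = s * c"
    unfolding load_def c by (simp add: overload_ray_def sum_distrib_left)
  have "?m j0 i * ln (?m j0 i * mu j0 i / (s * c)) = lam i * ?m j0 i - ln c * ?m j0 i"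
    if "i \<in> ?S" for i
  proof -
    have "mu j0 i > 0" using that assms(2) by auto
    then have "?m j0 i * mu j0 i / (s * c) = exp (lam i) / c"
      using that assms(3) by (simp add: overload_ray_def)
    then show ?thesis using c(2) by (simp add: ln_div algebra_simps)
  qed
  then have "(\<Sum>i\<in>?S. ?m j0 i * ln (?m j0 i * mu j0 i / (s * c)))
      = (\<Sum>i\<in>?S. lam i * ?m j0 i) - ln c * (s * c)"
    by (simp add: sum_subtractf sum_distrib_left[symmetric] load[unfolded load_def])
  then show ?thesis unfolding queue_excess_def True pos load by (simp add: algebra_simps)
qed (simp add: queue_excess_def overload_ray_def)

lemma dual_fun_infeasible:
  assumes "finite J" "finite Rt" "\<forall>i\<in>Rt. i \<subseteq> J" "\<forall>i\<in>Rt. \<forall>j\<in>i. mu j i > 0"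
    and "j0 \<in> J" and "(\<Sum>i\<in>{i\<in>Rt. j0 \<in> i}. exp (lam i) / mu j0 i) > 1"
  shows "dual_fun J Rt mu n lam = -\<infinity>"
proof (rule ccontr)
  define c where "c = (\<Sum>i\<in>{i\<in>Rt. j0 \<in> i}. exp (lam i) / mu j0 i)"
  define N where "N = (\<Sum>i\<in>Rt. n i * lam i)"
  have c: "c > 1" using assms(6) by (simp add: c_def)
  then have cl: "c * ln c > 0" by simp
  let ?L = "\<lambda>m. ereal (lagrangian J Rt mu n m lam)"
  assume "dual_fun J Rt mu n lam \<noteq> -\<infinity>"
  then obtain b where b: "b > -\<infinity>" "\<forall>m\<in>{m. \<forall>i\<in>Rt. \<forall>j\<in>i. m j i \<ge> 0}. b \<le> ?L m"
    unfolding dual_fun_def INF_eq_minf by blast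
  have ray: "?L (overload_ray mu lam j0 s) = ereal (N - s * (c * ln c))" if "s > 0" for s
    unfolding lagrangian_eq_sum_queue_excess[OF assms(1-3)] N_def
    using queue_excess_overload_ray[OF assms(2,4) that c_def] c assms(1,5)
    by (simp add: sum.delta)
  obtain r where r: "b = ereal r"
    using b(1) b(2)[rule_format, of "\<lambda>j i. 0"] by (cases b) auto
  define s where "s = (\<bar>N - r\<bar> + 1) / (c * ln c)"
  have s: "s > 0" and s_scale: "s * (c * ln c) = \<bar>N - r\<bar> + 1"
    using cl c unfolding s_def by (simp, simp add: order.strict_implies_not_eq)
  have "overload_ray mu lam j0 s \<in> {m. \<forall>i\<in>Rt. \<forall>j\<in>i. m j i \<ge> 0}"
    using s assms(4) by (auto simp: overload_ray_def intro!: divide_nonneg_pos)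
  then have "b \<le> ?L (overload_ray mu lam j0 s)" using b(2) by blast
  then have "r \<le> N - s * (c * ln c)" using ray[OF s] r by simp
  then show False unfolding s_scale by linarith
qed

lemma dual_fun_eq:
  assumes "finite J" "finite Rt" "\<forall>i\<in>Rt. i \<subseteq> J" "\<forall>i\<in>Rt. \<forall>j\<in>i. mu j i > 0"
  shows "dual_fun J Rt mu n lam =
           (if \<forall>j\<in>J. (\<Sum>i\<in>{i\<in>Rt. j \<in> i}. exp (lam i) / mu j i) \<le> 1
            then ereal (\<Sum>i\<in>Rt. n i * lam i) else -\<infinity>)"
  using dual_fun_feasible[OF assms] dual_fun_infeasible[OF assms] by (auto simp: not_le)

lemma feasible_shrink_shift:
  fixes t :: real
  assumes "finite J" "finite Rt" "\<forall>i\<in>Rt. \<forall>j\<in>i. mu j i > 0" "t < 1"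
    and "\<forall>j\<in>J. (\<Sum>i\<in>{i\<in>Rt. j \<in> i}. La i / mu j i) \<le> 1" "\<forall>i\<in>Rt. La i \<ge> 0" "t \<ge> 0"
  obtains s where "s > 0"
    "\<forall>j\<in>J. (\<Sum>i\<in>{i\<in>Rt. j \<in> i}. (t * La i + s) / mu j i) \<le> 1"
proof
  define K where "K = 1 + (\<Sum>j\<in>J. \<Sum>i\<in>{i\<in>Rt. j \<in> i}. 1 / mu j i)"
  have inv_mu: "0 \<le> 1 / mu j i" if "i \<in> Rt" "j \<in> i" for i j
    using assms(3) that by (simp add: less_imp_le)
  have K_ge: "(\<Sum>i\<in>{i\<in>Rt. j \<in> i}. 1 / mu j i) \<le> K" if "j \<in> J" for j
  proof -
    have "(\<Sum>i\<in>{i\<in>Rt. j \<in> i}. 1 / mu j i) \<le> (\<Sum>j\<in>J. \<Sum>i\<in>{i\<in>Rt. j \<in> i}. 1 / mu j i)"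
      by (rule member_le_sum[OF that _ assms(1)]) (auto intro!: sum_nonneg inv_mu)
    then show ?thesis unfolding K_def by simp
  qed
  have "K > 0" unfolding K_def using inv_mu by (smt (verit) mem_Collect_eq sum_nonneg)
  then show "(1 - t) / K > 0" using assms(4) by simp
  show "\<forall>j\<in>J. (\<Sum>i\<in>{i\<in>Rt. j \<in> i}. (t * La i + (1 - t) / K) / mu j i) \<le> 1"
  proof
    fix j assume j: "j \<in> J"
    have "(\<Sum>i\<in>{i\<in>Rt. j \<in> i}. (t * La i + (1 - t) / K) / mu j i)
        = t * (\<Sum>i\<in>{i\<in>Rt. j \<in> i}. La i / mu j i)
          + (1 - t) / K * (\<Sum>i\<in>{i\<in>Rt. j \<in> i}. 1 / mu j i)"
      by (simp add: add_divide_distrib sum.distrib sum_distrib_left)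
    also have "\<dots> \<le> t * 1 + (1 - t) / K * K"
      using assms(4,5,7) j K_ge[OF j] \<open>K > 0\<close> by (intro add_mono mult_left_mono) auto
    also have "\<dots> = 1" using \<open>K > 0\<close> by simp
    finally show "(\<Sum>i\<in>{i\<in>Rt. j \<in> i}. (t * La i + (1 - t) / K) / mu j i) \<le> 1" .
  qed
qed

lemma elog_le_ln_shrink_shift:
  fixes n La d s :: real
  assumes "n \<ge> 0" "La \<ge> 0" "s > 0"
  shows "ereal n * elog La \<le> ereal (n * ln (exp (- d) * La + s) + n * d)"
proof (cases "La > 0")
  case True
  have "ln (exp (- d) * La) \<le> ln (exp (- d) * La + s)"
    using True assms by (subst ln_le_cancel_iff) (auto intro: add_pos_pos)
  hence "ln La \<le> ln (exp (- d) * La + s) + d" using True by (simp add: ln_mult)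
  hence "n * ln La \<le> n * (ln (exp (- d) * La + s) + d)" using assms(1) by (rule mult_left_mono)
  then show ?thesis using True by (simp add: elog_def algebra_simps)
next
  case False
  then show ?thesis using assms by (cases "n = 0") (auto simp: elog_def)
qed

lemma elog_objective_le_dual_value:
  assumes "finite J" "finite Rt" "\<forall>i\<in>Rt. \<forall>j\<in>i. mu j i > 0" "\<forall>i\<in>Rt. n i \<ge> 0"
    and "\<forall>i\<in>Rt. La i \<ge> 0" "\<forall>j\<in>J. (\<Sum>i\<in>{i\<in>Rt. j \<in> i}. La i / mu j i) \<le> 1"
    and "e > 0"
  obtains lam where "\<forall>j\<in>J. (\<Sum>i\<in>{i\<in>Rt. j \<in> i}. exp (lam i) / mu j i) \<le> 1"
    "(\<Sum>i\<in>Rt. ereal (n i) * elog (La i)) \<le> ereal (\<Sum>i\<in>Rt. n i * lam i) + ereal e"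
proof -
  define N where "N = (\<Sum>i\<in>Rt. n i)"
  have N: "N \<ge> 0" unfolding N_def using assms(4) by (simp add: sum_nonneg)
  define d where "d = e / (N + 1)"
  have d: "d > 0" "N * d \<le> e" using assms(7) N by (simp_all add: d_def field_simps)
  obtain s where s: "s > 0"
    "\<forall>j\<in>J. (\<Sum>i\<in>{i\<in>Rt. j \<in> i}. (exp (- d) * La i + s) / mu j i) \<le> 1"
    using feasible_shrink_shift[OF assms(1-3) _ assms(6,5) exp_ge_zero, of "- d"] d(1) by auto
  define lam where "lam i = ln (exp (- d) * La i + s)" for i
  have "exp (lam i) = exp (- d) * La i + s" if "i \<in> Rt" for i
    unfolding lam_def using that assms(5) s(1) by (simp add: add_nonneg_pos)
  then have feasible: "\<forall>j\<in>J. (\<Sum>i\<in>{i\<in>Rt. j \<in> i}. exp (lam i) / mu j i) \<le> 1"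
    using s(2) by (metis (no_types, lifting) mem_Collect_eq sum.cong)
  have "(\<Sum>i\<in>Rt. ereal (n i) * elog (La i)) \<le> (\<Sum>i\<in>Rt. ereal (n i * lam i + n i * d))"
    unfolding lam_def by (intro sum_mono elog_le_ln_shrink_shift) (use assms(4,5) s(1) in auto)
  also have "\<dots> = ereal (\<Sum>i\<in>Rt. n i * lam i) + ereal (N * d)"
    by (simp add: sum_ereal sum.distrib N_def sum_distrib_right)
  also have "\<dots> \<le> ereal (\<Sum>i\<in>Rt. n i * lam i) + ereal e"
    using d(2) by (intro add_left_mono) simp
  finally show ?thesis using that feasible by blast
qed

lemma SUP_dual_fun_eq_SUP_elog_objective:
  assumes "finite J" "finite Rt" "\<forall>i\<in>Rt. i \<subseteq> J" "\<forall>i\<in>Rt. \<forall>j\<in>i. mu j i > 0"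
    and "\<forall>i\<in>Rt. n i \<ge> 0"
  shows "(SUP lam. dual_fun J Rt mu n lam) =
         (SUP La\<in>{La. (\<forall>i\<in>Rt. La i \<ge> 0) \<and>
                       (\<forall>j\<in>J. (\<Sum>i\<in>{i\<in>Rt. j \<in> i}. La i / mu j i) \<le> 1)}.
            \<Sum>i\<in>Rt. ereal (n i) * elog (La i))"
proof -
  note dual = dual_fun_eq[OF assms(1-4), of n]
  let ?F = "{La. (\<forall>i\<in>Rt. La i \<ge> 0) \<and> (\<forall>j\<in>J. (\<Sum>i\<in>{i\<in>Rt. j \<in> i}. La i / mu j i) \<le> (1::real))}"
  let ?v = "\<lambda>La. \<Sum>i\<in>Rt. ereal (n i) * elog (La i)"
  have "dual_fun J Rt mu n lam \<le> (SUP La\<in>?F. ?v La)" for lam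
  proof (cases "\<forall>j\<in>J. (\<Sum>i\<in>{i\<in>Rt. j \<in> i}. exp (lam i) / mu j i) \<le> 1")
    case True
    then have exp_lam: "(\<lambda>i. exp (lam i)) \<in> ?F" by auto
    have "dual_fun J Rt mu n lam = ereal (\<Sum>i\<in>Rt. n i * lam i)" using True dual by simp
    also have "\<dots> = (\<Sum>i\<in>Rt. ereal (n i * lam i))" by (rule sum_ereal[symmetric])
    also have "\<dots> = ?v (\<lambda>i. exp (lam i))" by (simp add: elog_def)
    also have "\<dots> \<le> (SUP La\<in>?F. ?v La)" by (rule SUP_upper[OF exp_lam])
    finally show ?thesis .
  qed (use dual in auto)
  moreover have "?v La \<le> (SUP lam. dual_fun J Rt mu n lam)" if "La \<in> ?F" for La
  proof (rule ereal_le_epsilon2)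
    fix e :: real assume "e > 0"
    moreover have "\<forall>i\<in>Rt. La i \<ge> 0" "\<forall>j\<in>J. (\<Sum>i\<in>{i\<in>Rt. j \<in> i}. La i / mu j i) \<le> 1"
      using that by auto
    ultimately obtain lam where lam_feasible: "\<forall>j\<in>J. (\<Sum>i\<in>{i\<in>Rt. j \<in> i}. exp (lam i) / mu j i) \<le> 1"
        and bound: "?v La \<le> ereal (\<Sum>i\<in>Rt. n i * lam i) + ereal e"
      using elog_objective_le_dual_value[OF assms(1,2,4,5)] by blast
    have "ereal (\<Sum>i\<in>Rt. n i * lam i) = dual_fun J Rt mu n lam" using lam_feasible dual by simp
    also have "\<dots> \<le> (SUP lam. dual_fun J Rt mu n lam)" by (rule SUP_upper) simp
    finally show "?v La \<le> (SUP lam. dual_fun J Rt mu n lam) + ereal e"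
      using bound by (blast intro: order_trans add_right_mono)
  qed
  ultimately show ?thesis by (intro antisym SUP_least) blast+
qed

theorem lemma11:
  fixes J :: "'j set" and Rt :: "'j set set"
    and mu :: "'j \<Rightarrow> 'j set \<Rightarrow> real" and n :: "'j set \<Rightarrow> real"
  assumes "finite J" and "finite Rt" and "\<forall>i\<in>Rt. i \<subseteq> J"
    and "\<forall>i\<in>Rt. \<forall>j\<in>i. mu j i > 0"
    and "\<forall>i\<in>Rt. n i \<ge> 0"
  shows "(\<forall>lam. dual_fun J Rt mu n lam =
            (if \<forall>j\<in>J. (\<Sum>i\<in>{i\<in>Rt. j \<in> i}. exp (lam i) / mu j i) \<le> 1
             then ereal (\<Sum>i\<in>Rt. n i * lam i) else -\<infinity>))
       \<and> (SUP lam. dual_fun J Rt mu n lam) =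
         (SUP La\<in>{La. (\<forall>i\<in>Rt. La i \<ge> 0) \<and>
                       (\<forall>j\<in>J. (\<Sum>i\<in>{i\<in>Rt. j \<in> i}. La i / mu j i) \<le> 1)}.
            \<Sum>i\<in>Rt. ereal (n i) * elog (La i))"
  using dual_fun_eq[OF assms(1-4)] SUP_dual_fun_eq_SUP_elog_objective[OF assms] by blast

end
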